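(* Let $n$ DMUs, indexed by $J$, each use $m$ inputs (indexed by $I$) and produce $s$ outputs (indexed by $R$), with $n\ge 2(m+s)$ and all data $x_{ij}>0$, $y_{rj}>0$. Fix $o\in J$ and let $(Q_o^\star,P_o^\star,\pi^\star)$ be an optimal solution of the TAP program of the PT model $$\max\ \sum_{i\in I}Q_{io}\tau_o+\sum_{r\in R}P_{ro}\tau_o\quad\text{s.t.}\quad \sum_{j\in J}x_{ij}\pi_{jo}+Q_{io}x_{io}=x_{io}\ (i\in I),\ \ -\sum_{j\in J}y_{rj}\pi_{jo}+P_{ro}y_{ro}=-y_{ro}\ (r\in R),\ \ \pi_o,Q_o,P_o\ge0,$$ with goal price $\tau_o>0$. Define the benchmarks $\widehat x_{io}=\sum_{j\in J}x_{ij}\pi^\star_{jo}=x_{io}(1-Q^\star_{io})$ and $\widehat y_{ro}=\sum_{j\in J}y_{rj}\pi^\star_{jo}=y_{ro}(1+P^\star_{ro})$. Then assessing DMU-$o$ with the adjusted inputs $\widehat x_{io}$ and outputs $\widehat y_{ro}$ in place of $x_{io},y_{ro}$ by the PT model yields PT efficiency $\widehat E_o^{PT\star}=1$.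
   Context: The PT model's TVG (primal) program for an evaluated DMU with data $(x_{io},y_{ro})$ is $\min\sum_i v_{io}x_{io}-\sum_r u_{ro}y_{ro}$ s.t. $\sum_i v_{io}x_{ij}-\sum_r u_{ro}y_{rj}\ge0$ ($j\in J$), $x_{io}v_{io}\ge\tau_o$ ($i\in I$), $y_{ro}u_{ro}\ge\tau_o$ ($r\in R$), $v_o,u_o$ free. With an optimal solution $(v_o^\#,u_o^\#)$ for $\tau_o=1$, set $\bar t=1/\sum_i v^\#_{io}x_{io}$ and $(v_o^\star,u_o^\star)=\bar t(v_o^\#,u_o^\#)$; the PT efficiency is $E_o^{PT\star}=\sum_r u^\star_{ro}y_{ro}/\sum_i v^\star_{io}x_{io}$, equivalently $1$ minus (optimal total virtual gap)/(virtual input). *)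

theory Defs
  imports Complex_Main "HOL-Library.Cardinality"
begin

text \<open>DEA data: inputs x i j (i :: 'i input index, j :: 'j DMU index), outputs y r j.
  Index sets I, R, J are the finite types 'i, 'r, 'j, so m = CARD('i), s = CARD('r), n = CARD('j).\<close>

definition tap_feasible ::
  "('i::finite \<Rightarrow> 'j::finite \<Rightarrow> real) \<Rightarrow> ('r::finite \<Rightarrow> 'j \<Rightarrow> real) \<Rightarrow> 'j \<Rightarrow>
   ('i \<Rightarrow> real) \<Rightarrow> ('r \<Rightarrow> real) \<Rightarrow> ('j \<Rightarrow> real) \<Rightarrow> bool" where
  "tap_feasible x y k Q P \<pi> \<longleftrightarrow>
     (\<forall>i. (\<Sum>j\<in>UNIV. x i j * \<pi> j) + Q i * x i k = x i k) \<and>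
     (\<forall>r. - (\<Sum>j\<in>UNIV. y r j * \<pi> j) + P r * y r k = - y r k) \<and>
     (\<forall>j. \<pi> j \<ge> 0) \<and> (\<forall>i. Q i \<ge> 0) \<and> (\<forall>r. P r \<ge> 0)"

definition tap_obj :: "real \<Rightarrow> ('i::finite \<Rightarrow> real) \<Rightarrow> ('r::finite \<Rightarrow> real) \<Rightarrow> real" where
  "tap_obj \<tau> Q P = (\<Sum>i\<in>UNIV. Q i * \<tau>) + (\<Sum>r\<in>UNIV. P r * \<tau>)"

definition tap_optimal ::
  "real \<Rightarrow> ('i::finite \<Rightarrow> 'j::finite \<Rightarrow> real) \<Rightarrow> ('r::finite \<Rightarrow> 'j \<Rightarrow> real) \<Rightarrow> 'j \<Rightarrow>
   ('i \<Rightarrow> real) \<Rightarrow> ('r \<Rightarrow> real) \<Rightarrow> ('j \<Rightarrow> real) \<Rightarrow> bool" where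
  "tap_optimal \<tau> x y k Q P \<pi> \<longleftrightarrow> tap_feasible x y k Q P \<pi> \<and>
     (\<forall>Q' P' \<pi>'. tap_feasible x y k Q' P' \<pi>' \<longrightarrow> tap_obj \<tau> Q' P' \<le> tap_obj \<tau> Q P)"

text \<open>TVG (primal) program of the PT model: the evaluated DMU has data (xo, yo);
  the frontier constraints range over all DMUs j with data (x, y).\<close>
definition tvg_feasible ::
  "('i::finite \<Rightarrow> 'j::finite \<Rightarrow> real) \<Rightarrow> ('r::finite \<Rightarrow> 'j \<Rightarrow> real) \<Rightarrow>
   ('i \<Rightarrow> real) \<Rightarrow> ('r \<Rightarrow> real) \<Rightarrow> real \<Rightarrow> ('i \<Rightarrow> real) \<Rightarrow> ('r \<Rightarrow> real) \<Rightarrow> bool" where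
  "tvg_feasible x y xo yo \<tau> v u \<longleftrightarrow>
     (\<forall>j. (\<Sum>i\<in>UNIV. v i * x i j) - (\<Sum>r\<in>UNIV. u r * y r j) \<ge> 0) \<and>
     (\<forall>i. xo i * v i \<ge> \<tau>) \<and> (\<forall>r. yo r * u r \<ge> \<tau>)"

definition tvg_obj :: "('i::finite \<Rightarrow> real) \<Rightarrow> ('r::finite \<Rightarrow> real) \<Rightarrow> ('i \<Rightarrow> real) \<Rightarrow> ('r \<Rightarrow> real) \<Rightarrow> real" where
  "tvg_obj xo yo v u = (\<Sum>i\<in>UNIV. v i * xo i) - (\<Sum>r\<in>UNIV. u r * yo r)"

definition tvg_optimal ::
  "('i::finite \<Rightarrow> 'j::finite \<Rightarrow> real) \<Rightarrow> ('r::finite \<Rightarrow> 'j \<Rightarrow> real) \<Rightarrow>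
   ('i \<Rightarrow> real) \<Rightarrow> ('r \<Rightarrow> real) \<Rightarrow> real \<Rightarrow> ('i \<Rightarrow> real) \<Rightarrow> ('r \<Rightarrow> real) \<Rightarrow> bool" where
  "tvg_optimal x y xo yo \<tau> v u \<longleftrightarrow> tvg_feasible x y xo yo \<tau> v u \<and>
     (\<forall>v' u'. tvg_feasible x y xo yo \<tau> v' u' \<longrightarrow> tvg_obj xo yo v u \<le> tvg_obj xo yo v' u')"

text \<open>PT efficiency from an optimal solution (v#, u#) of TVG with tau = 1:
  tbar = 1 / virtual input, (v*, u*) = tbar (v#, u#), E = virtual output / virtual input.\<close>
definition pt_efficiency ::
  "('i::finite \<Rightarrow> real) \<Rightarrow> ('r::finite \<Rightarrow> real) \<Rightarrow> ('i \<Rightarrow> real) \<Rightarrow> ('r \<Rightarrow> real) \<Rightarrow> real" where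
  "pt_efficiency xo yo v u =
     (let tbar = 1 / (\<Sum>i\<in>UNIV. v i * xo i);
          vs = (\<lambda>i. tbar * v i); us = (\<lambda>r. tbar * u r)
      in (\<Sum>r\<in>UNIV. us r * yo r) / (\<Sum>i\<in>UNIV. vs i * xo i))"

definition bench_x :: "('i \<Rightarrow> 'j::finite \<Rightarrow> real) \<Rightarrow> ('j \<Rightarrow> real) \<Rightarrow> 'i \<Rightarrow> real" where
  "bench_x x \<pi> i = (\<Sum>j\<in>UNIV. x i j * \<pi> j)"

definition bench_y :: "('r \<Rightarrow> 'j::finite \<Rightarrow> real) \<Rightarrow> ('j \<Rightarrow> real) \<Rightarrow> 'r \<Rightarrow> real" where
  "bench_y y \<pi> r = (\<Sum>j\<in>UNIV. y r j * \<pi> j)"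

end

theory Submission
  imports Defs "HOL-Analysis.Analysis"
begin

text \<open>
  Write Z_j = (x_j, -y_j) for the activity of DMU j and w = sum_j pi_j Z_j = (xhat, -yhat) for the
  benchmark. Optimality of the TAP solution makes w a minimal point of the cone spanned by the Z_j:
  a nonnegative combination using no more of any input and producing no less of any output is
  another TAP solution, whose objective exceeds that of pi by tau times a positive combination of
  the improvements, so it equals w. Separating w - e_l from the cone spanned by the Z_j, the unit
  vectors and -w gives, for every coordinate l, nonnegative prices that support the cone at w and
  are positive at l; their sum p is strictly positive. A multiple of p is TVG-feasible for the
  benchmark data with total virtual gap 0, and 0 is optimal because at the benchmark the gap is the
  pi-weighted sum of the nonnegative frontier gaps. So every optimum has equal virtual input and
  output.
\<close>

lemma separating_hyperplane_finite_cone: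
  fixes G :: "(real^'n) set" and z :: "real^'n"
  assumes "finite G" and "z \<notin> convex_cone hull G"
  shows "\<exists>a. (\<forall>g\<in>G. 0 \<le> a \<bullet> g) \<and> a \<bullet> z < 0"
proof -
  obtain a b where az: "a \<bullet> z < b" and aG: "\<forall>v\<in>convex_cone hull G. b < a \<bullet> v"
    using separating_hyperplane_closed_point[OF convex_convex_cone_hull
        closed_convex_cone_hull[OF assms(1)] assms(2)] by blast
  have "b < 0"
    using aG convex_cone_hull_contains_0 by force
  have "0 \<le> a \<bullet> g" if "g \<in> G" for g
  proof (rule ccontr)
    assume "\<not> 0 \<le> a \<bullet> g"
    then have neg: "a \<bullet> g < 0" by simp
    have "(b / (a \<bullet> g)) *\<^sub>R g \<in> convex_cone hull G"
      using \<open>b < 0\<close> neg \<open>g \<in> G\<close>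
      by (intro convex_cone_hull_mul hull_inc) (simp_all add: divide_nonpos_neg)
    then have "b < a \<bullet> ((b / (a \<bullet> g)) *\<^sub>R g)"
      using aG by blast
    then show False
      using neg by simp
  qed
  then show ?thesis
    using az \<open>b < 0\<close> by (intro exI[of _ a]) auto
qed

definition cone_minimal :: "('j::finite \<Rightarrow> real^'n) \<Rightarrow> real^'n \<Rightarrow> bool" where
  "cone_minimal Z w \<longleftrightarrow>
     (\<forall>\<mu>. (\<forall>j. 0 \<le> \<mu> j) \<longrightarrow> (\<Sum>j\<in>UNIV. \<mu> j *\<^sub>R Z j) \<le> w \<longrightarrow> (\<Sum>j\<in>UNIV. \<mu> j *\<^sub>R Z j) = w)"

lemma convex_cone_dominating_combinations:
  fixes Z :: "'j::finite \<Rightarrow> real^'n"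
  shows "convex_cone {v. \<exists>\<mu> t. (\<forall>j. 0 \<le> \<mu> j) \<and> 0 \<le> t \<and> (\<Sum>j\<in>UNIV. \<mu> j *\<^sub>R Z j) - t *\<^sub>R w \<le> v}"
    (is "convex_cone ?S")
  unfolding convex_cone_iff
proof (intro conjI ballI allI impI)
  show "0 \<in> ?S"
    by (intro CollectI exI[of _ "\<lambda>_. 0"] exI[of _ 0]) simp
next
  fix u v
  assume "u \<in> ?S" and "v \<in> ?S"
  then obtain \<mu> t \<nu> s where
    "\<forall>j. 0 \<le> \<mu> j" "0 \<le> t" "(\<Sum>j\<in>UNIV. \<mu> j *\<^sub>R Z j) - t *\<^sub>R w \<le> u"
    "\<forall>j. 0 \<le> \<nu> j" "0 \<le> s" "(\<Sum>j\<in>UNIV. \<nu> j *\<^sub>R Z j) - s *\<^sub>R w \<le> v"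
    by blast
  moreover have "(\<Sum>j\<in>UNIV. (\<mu> j + \<nu> j) *\<^sub>R Z j) - (t + s) *\<^sub>R w =
      ((\<Sum>j\<in>UNIV. \<mu> j *\<^sub>R Z j) - t *\<^sub>R w) + ((\<Sum>j\<in>UNIV. \<nu> j *\<^sub>R Z j) - s *\<^sub>R w)"
    by (simp add: scaleR_add_left sum.distrib algebra_simps)
  ultimately show "u + v \<in> ?S"
    by (intro CollectI exI[of _ "\<lambda>j. \<mu> j + \<nu> j"] exI[of _ "t + s"]) (auto intro: add_mono)
next
  fix v and c :: real
  assume "v \<in> ?S" and "0 \<le> c"
  then obtain \<mu> t where
    "\<forall>j. 0 \<le> \<mu> j" "0 \<le> t" "(\<Sum>j\<in>UNIV. \<mu> j *\<^sub>R Z j) - t *\<^sub>R w \<le> v"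
    by blast
  moreover have "(\<Sum>j\<in>UNIV. (c * \<mu> j) *\<^sub>R Z j) - (c * t) *\<^sub>R w =
      c *\<^sub>R ((\<Sum>j\<in>UNIV. \<mu> j *\<^sub>R Z j) - t *\<^sub>R w)"
    by (simp add: scaleR_sum_right scaleR_diff_right)
  ultimately show "c *\<^sub>R v \<in> ?S"
    using \<open>0 \<le> c\<close>
    by (intro CollectI exI[of _ "\<lambda>j. c * \<mu> j"] exI[of _ "c * t"]) (auto intro: scaleR_left_mono)
qed

lemma cone_minimal_not_dominating_unit_step:
  fixes Z :: "'j::finite \<Rightarrow> real^'n"
  assumes "cone_minimal Z w" and "\<forall>j. 0 \<le> \<mu> j" and "0 \<le> t"
  shows "\<not> (\<Sum>j\<in>UNIV. \<mu> j *\<^sub>R Z j) - t *\<^sub>R w \<le> w - axis l 1"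
proof
  assume "(\<Sum>j\<in>UNIV. \<mu> j *\<^sub>R Z j) - t *\<^sub>R w \<le> w - axis l 1"
  then have "(\<Sum>j\<in>UNIV. \<mu> j *\<^sub>R Z j) \<le> (1 + t) *\<^sub>R w - axis l 1"
    by (simp add: less_eq_vec_def algebra_simps)
  then have "inverse (1 + t) *\<^sub>R (\<Sum>j\<in>UNIV. \<mu> j *\<^sub>R Z j) \<le>
      inverse (1 + t) *\<^sub>R ((1 + t) *\<^sub>R w - axis l 1)"
    using \<open>0 \<le> t\<close> by (intro scaleR_left_mono) simp_all
  also have "\<dots> = w - axis l (inverse (1 + t))"
    using \<open>0 \<le> t\<close> by (simp add: scaleR_diff_right vec_eq_iff axis_def)
  finally have le: "(\<Sum>j\<in>UNIV. (\<mu> j / (1 + t)) *\<^sub>R Z j) \<le> w - axis l (inverse (1 + t))"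
    by (simp add: scaleR_sum_right divide_inverse mult.commute)
  moreover have "w - axis l (inverse (1 + t)) \<le> w"
    using \<open>0 \<le> t\<close> by (simp add: less_eq_vec_def axis_def)
  moreover have "\<forall>j. 0 \<le> \<mu> j / (1 + t)"
    using assms(2,3) by simp
  ultimately have "(\<Sum>j\<in>UNIV. (\<mu> j / (1 + t)) *\<^sub>R Z j) = w"
    using assms(1) unfolding cone_minimal_def by (meson order_trans)
  with le have "w \<le> w - axis l (inverse (1 + t))"
    by simp
  then have "w $ l \<le> w $ l - inverse (1 + t)"
    unfolding less_eq_vec_def by (metis vector_minus_component axis_nth)
  then show False
    using \<open>0 \<le> t\<close> by simp
qed

lemma cone_minimal_coordinate_support:
  fixes Z :: "'j::finite \<Rightarrow> real^'n"
  assumes "cone_minimal Z w" and "\<forall>j. 0 \<le> \<pi> j" and "w = (\<Sum>j\<in>UNIV. \<pi> j *\<^sub>R Z j)"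
  shows "\<exists>a. 0 \<le> a \<and> (\<forall>j. 0 \<le> a \<bullet> Z j) \<and> a \<bullet> w = 0 \<and> 0 < a $ l"
proof -
  \<comment> \<open>The unit vectors make the separating functional nonnegative; the generator -w forces it
    to vanish at w.\<close>
  define G where "G = range Z \<union> range (\<lambda>m. axis m 1) \<union> {- w}"
  let ?S = "{v. \<exists>\<mu> t. (\<forall>j. 0 \<le> \<mu> j) \<and> 0 \<le> t \<and> (\<Sum>j\<in>UNIV. \<mu> j *\<^sub>R Z j) - t *\<^sub>R w \<le> v}"
  have "G \<subseteq> ?S"
  proof -
    have "Z j \<in> ?S" for j
      by (intro CollectI exI[of _ "\<lambda>i. if i = j then 1 else 0"] exI[of _ 0])
        (simp add: if_distrib[of "\<lambda>c. c *\<^sub>R _"] cong: if_cong)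
    moreover have "axis m 1 \<in> ?S" for m
      by (intro CollectI exI[of _ "\<lambda>_. 0"] exI[of _ 0]) (simp add: less_eq_vec_def axis_def)
    moreover have "- w \<in> ?S"
      by (intro CollectI exI[of _ "\<lambda>_. 0"] exI[of _ 1]) simp
    ultimately show ?thesis
      unfolding G_def by blast
  qed
  then have "convex_cone hull G \<subseteq> ?S"
    by (rule hull_minimal) (rule convex_cone_dominating_combinations)
  moreover have "w - axis l 1 \<notin> ?S"
    using cone_minimal_not_dominating_unit_step[OF assms(1)] by blast
  ultimately have "w - axis l 1 \<notin> convex_cone hull G"
    by blast
  moreover have "finite G"
    by (simp add: G_def)
  ultimately obtain a where aG: "\<forall>g\<in>G. 0 \<le> a \<bullet> g" and neg: "a \<bullet> (w - axis l 1) < 0"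
    using separating_hyperplane_finite_cone by blast
  have aZ: "\<forall>j. 0 \<le> a \<bullet> Z j"
    using aG unfolding G_def by blast
  have "0 \<le> a"
  proof -
    have "0 \<le> a \<bullet> axis m 1" for m
      using aG unfolding G_def by blast
    then show ?thesis
      by (simp add: less_eq_vec_def inner_axis)
  qed
  have "0 \<le> a \<bullet> w"
    using aZ assms(2,3) by (simp add: inner_sum_right sum_nonneg)
  moreover have "a \<bullet> w \<le> 0"
    using aG unfolding G_def by simp
  ultimately have "a \<bullet> w = 0"
    by simp
  with neg have "0 < a $ l"
    by (simp add: inner_diff_right inner_axis)
  with \<open>0 \<le> a\<close> aZ \<open>a \<bullet> w = 0\<close> show ?thesis
    by blast
qed

lemma cone_minimal_strictly_positive_support:
  fixes Z :: "'j::finite \<Rightarrow> real^'n"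
  assumes "cone_minimal Z w" and "\<forall>j. 0 \<le> \<pi> j" and "w = (\<Sum>j\<in>UNIV. \<pi> j *\<^sub>R Z j)"
  shows "\<exists>p. (\<forall>l. 0 < p $ l) \<and> (\<forall>j. 0 \<le> p \<bullet> Z j) \<and> p \<bullet> w = 0"
proof -
  obtain a where a: "\<And>l. 0 \<le> a l \<and> (\<forall>j. 0 \<le> a l \<bullet> Z j) \<and> a l \<bullet> w = 0 \<and> 0 < a l $ l"
    using cone_minimal_coordinate_support[OF assms] by metis
  define p where "p = (\<Sum>l\<in>UNIV. a l)"
  have "0 < p $ l" for l
  proof -
    have "a l $ l \<le> (\<Sum>m\<in>UNIV. a m $ l)"
      using a by (intro member_le_sum) (auto simp: less_eq_vec_def)
    then show ?thesis
      using a[of l] by (simp add: p_def)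
  qed
  moreover have "0 \<le> p \<bullet> Z j" for j
    using a by (simp add: p_def inner_sum_left sum_nonneg)
  moreover have "p \<bullet> w = 0"
    using a by (simp add: p_def inner_sum_left)
  ultimately show ?thesis
    by blast
qed

definition activity :: "('i::finite \<Rightarrow> real) \<Rightarrow> ('r::finite \<Rightarrow> real) \<Rightarrow> real^('i + 'r)" where
  "activity a b = (\<chi> l. case l of Inl i \<Rightarrow> a i | Inr r \<Rightarrow> - b r)"

lemma inner_activity:
  "p \<bullet> activity a b = (\<Sum>i\<in>UNIV. p $ Inl i * a i) - (\<Sum>r\<in>UNIV. p $ Inr r * b r)"
proof -
  have "p \<bullet> activity a b = (\<Sum>l\<in>UNIV <+> UNIV. p $ l * (case l of Inl i \<Rightarrow> a i | Inr r \<Rightarrow> - b r))"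
    by (simp add: inner_vec_def activity_def)
  also have "\<dots> = (\<Sum>i\<in>UNIV. p $ Inl i * a i) - (\<Sum>r\<in>UNIV. p $ Inr r * b r)"
    by (subst sum.Plus) (simp_all add: sum_negf)
  finally show ?thesis .
qed

lemma activity_le_iff:
  "activity a b \<le> activity a' b' \<longleftrightarrow> (\<forall>i. a i \<le> a' i) \<and> (\<forall>r. b' r \<le> b r)"
  by (auto simp: less_eq_vec_def activity_def split: sum.split)

lemma activity_bench:
  "activity (bench_x x \<pi>) (bench_y y \<pi>) = (\<Sum>j\<in>UNIV. \<pi> j *\<^sub>R activity (\<lambda>i. x i j) (\<lambda>r. y r j))"
  by (auto simp: vec_eq_iff activity_def bench_x_def bench_y_def mult.commute sum_negf split: sum.split)

lemma tap_feasible_bench_x: "tap_feasible x y k Q P \<pi> \<Longrightarrow> bench_x x \<pi> i = x i k * (1 - Q i)"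
  by (simp add: tap_feasible_def bench_x_def algebra_simps eq_diff_eq)

lemma tap_feasible_bench_y: "tap_feasible x y k Q P \<pi> \<Longrightarrow> bench_y y \<pi> r = y r k * (1 + P r)"
  by (simp add: tap_feasible_def bench_y_def algebra_simps)

lemma tap_obj_feasible:
  assumes "tap_feasible x y k Q P \<pi>" and "\<forall>i. x i k \<noteq> 0" and "\<forall>r. y r k \<noteq> 0"
  shows "tap_obj \<tau> Q P =
    \<tau> * ((\<Sum>i\<in>UNIV. 1 - bench_x x \<pi> i / x i k) + (\<Sum>r\<in>UNIV. bench_y y \<pi> r / y r k - 1))"
proof -
  have "Q i = 1 - bench_x x \<pi> i / x i k" for i
    using tap_feasible_bench_x[OF assms(1)] assms(2) by (simp add: field_simps)
  moreover have "P r = bench_y y \<pi> r / y r k - 1" for r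
    using tap_feasible_bench_y[OF assms(1)] assms(3) by (simp add: field_simps)
  ultimately show ?thesis
    by (simp add: tap_obj_def distrib_left sum_distrib_left mult.commute)
qed

lemma tap_feasible_intensity:
  assumes "\<forall>j. 0 \<le> \<mu> j" and "\<forall>i. bench_x x \<mu> i \<le> x i k" and "\<forall>r. y r k \<le> bench_y y \<mu> r"
    and "\<forall>i. 0 < x i k" and "\<forall>r. 0 < y r k"
  shows "tap_feasible x y k (\<lambda>i. 1 - bench_x x \<mu> i / x i k) (\<lambda>r. bench_y y \<mu> r / y r k - 1) \<mu>"
proof -
  have "x i k \<noteq> 0" "y r k \<noteq> 0" for i r
    using assms(4,5) by (metis less_irrefl)+
  with assms show ?thesis
    unfolding tap_feasible_def by (auto simp: bench_x_def bench_y_def field_simps)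
qed

lemma tap_optimal_bench_undominated:
  fixes x :: "'i::finite \<Rightarrow> 'j::finite \<Rightarrow> real" and y :: "'r::finite \<Rightarrow> 'j \<Rightarrow> real"
  assumes opt: "tap_optimal \<tau> x y k Q P \<pi>" and "0 < \<tau>"
    and xk: "\<forall>i. 0 < x i k" and yk: "\<forall>r. 0 < y r k" and \<mu>: "\<forall>j. 0 \<le> \<mu> j"
    and hx: "\<forall>i. bench_x x \<mu> i \<le> bench_x x \<pi> i" and hy: "\<forall>r. bench_y y \<pi> r \<le> bench_y y \<mu> r"
  shows "bench_x x \<mu> = bench_x x \<pi> \<and> bench_y y \<mu> = bench_y y \<pi>"
proof -
  have feas: "tap_feasible x y k Q P \<pi>"
    using opt unfolding tap_optimal_def by blast
  have nz: "\<forall>i. x i k \<noteq> 0" "\<forall>r. y r k \<noteq> 0"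
    using xk yk by (metis less_irrefl)+
  have "0 \<le> Q i" "0 \<le> P r" for i r
    using feas unfolding tap_feasible_def by auto
  then have "\<forall>i. bench_x x \<pi> i \<le> x i k" "\<forall>r. y r k \<le> bench_y y \<pi> r"
    using tap_feasible_bench_x[OF feas] tap_feasible_bench_y[OF feas] xk yk
    by (simp_all add: mult_left_le less_imp_le)
  with hx hy have feas\<mu>:
      "tap_feasible x y k (\<lambda>i. 1 - bench_x x \<mu> i / x i k) (\<lambda>r. bench_y y \<mu> r / y r k - 1) \<mu>"
    using \<mu> xk yk by (intro tap_feasible_intensity) (auto intro: order_trans)
  then have "tap_obj \<tau> (\<lambda>i. 1 - bench_x x \<mu> i / x i k) (\<lambda>r. bench_y y \<mu> r / y r k - 1) \<le> tap_obj \<tau> Q P"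
    using opt unfolding tap_optimal_def by blast
  then have "(\<Sum>i\<in>UNIV. 1 - bench_x x \<mu> i / x i k) + (\<Sum>r\<in>UNIV. bench_y y \<mu> r / y r k - 1)
      \<le> (\<Sum>i\<in>UNIV. 1 - bench_x x \<pi> i / x i k) + (\<Sum>r\<in>UNIV. bench_y y \<pi> r / y r k - 1)"
    unfolding tap_obj_feasible[OF feas\<mu> nz] tap_obj_feasible[OF feas nz] using \<open>0 < \<tau>\<close> by simp
  then have le: "(\<Sum>i\<in>UNIV. (bench_x x \<pi> i - bench_x x \<mu> i) / x i k)
      + (\<Sum>r\<in>UNIV. (bench_y y \<mu> r - bench_y y \<pi> r) / y r k) \<le> 0"
    by (simp add: diff_divide_distrib sum_subtractf)
  have gx: "\<forall>i. 0 \<le> (bench_x x \<pi> i - bench_x x \<mu> i) / x i k"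
    using hx xk by (simp add: less_imp_le)
  have gy: "\<forall>r. 0 \<le> (bench_y y \<mu> r - bench_y y \<pi> r) / y r k"
    using hy yk by (simp add: less_imp_le)
  have "0 \<le> (\<Sum>i\<in>UNIV. (bench_x x \<pi> i - bench_x x \<mu> i) / x i k)"
    and "0 \<le> (\<Sum>r\<in>UNIV. (bench_y y \<mu> r - bench_y y \<pi> r) / y r k)"
    using gx gy by (simp_all add: sum_nonneg)
  with le have "(\<Sum>i\<in>UNIV. (bench_x x \<pi> i - bench_x x \<mu> i) / x i k) = 0"
    and "(\<Sum>r\<in>UNIV. (bench_y y \<mu> r - bench_y y \<pi> r) / y r k) = 0"
    by linarith+
  with gx gy nz show ?thesis
    by (auto simp: sum_nonneg_eq_0_iff fun_eq_iff)
qed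

lemma tap_optimal_imp_cone_minimal:
  fixes x :: "'i::finite \<Rightarrow> 'j::finite \<Rightarrow> real" and y :: "'r::finite \<Rightarrow> 'j \<Rightarrow> real"
  assumes "tap_optimal \<tau> x y k Q P \<pi>" and "0 < \<tau>" and "\<forall>i. 0 < x i k" and "\<forall>r. 0 < y r k"
  shows "cone_minimal (\<lambda>j. activity (\<lambda>i. x i j) (\<lambda>r. y r j)) (activity (bench_x x \<pi>) (bench_y y \<pi>))"
  unfolding cone_minimal_def activity_bench[symmetric] activity_le_iff
  by (auto dest!: tap_optimal_bench_undominated[OF assms])

lemma tap_feasible_bench_pos:
  fixes x :: "'i::finite \<Rightarrow> 'j::finite \<Rightarrow> real" and y :: "'r::finite \<Rightarrow> 'j \<Rightarrow> real"
  assumes feas: "tap_feasible x y k Q P \<pi>" and "\<forall>i j. 0 < x i j" and "\<forall>r j. 0 < y r j"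
  shows "0 < bench_x x \<pi> i" and "0 < bench_y y \<pi> r"
proof -
  have \<pi>: "\<forall>j. 0 \<le> \<pi> j" and "\<forall>r. 0 \<le> P r"
    using feas unfolding tap_feasible_def by auto
  then show y_pos: "0 < bench_y y \<pi> r" for r
    using tap_feasible_bench_y[OF feas] assms(3) by (simp add: add_pos_nonneg)
  have "\<exists>j. 0 < \<pi> j"
  proof (rule ccontr)
    assume "\<nexists>j. 0 < \<pi> j"
    with \<pi> have "\<pi> = (\<lambda>_. 0)"
      by (auto simp: fun_eq_iff not_less intro: order.antisym)
    then have "bench_y y \<pi> r = 0" for r
      by (simp add: bench_y_def)
    with y_pos show False
      by (metis less_irrefl)
  qed
  then obtain j where "0 < \<pi> j"
    by blast
  then have "0 < x i j * \<pi> j"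
    using assms(2) by simp
  also have "\<dots> \<le> bench_x x \<pi> i"
    unfolding bench_x_def using \<pi> assms(2) by (intro member_le_sum) (auto intro!: mult_nonneg_nonneg simp: less_imp_le)
  finally show "0 < bench_x x \<pi> i" .
qed

lemma tvg_obj_bench:
  "tvg_obj (bench_x x \<pi>) (bench_y y \<pi>) v u =
     (\<Sum>j\<in>UNIV. \<pi> j * ((\<Sum>i\<in>UNIV. v i * x i j) - (\<Sum>r\<in>UNIV. u r * y r j)))"
proof -
  have "(\<Sum>i\<in>UNIV. v i * bench_x x \<pi> i) = (\<Sum>j\<in>UNIV. \<pi> j * (\<Sum>i\<in>UNIV. v i * x i j))"
    unfolding bench_x_def sum_distrib_left by (subst sum.swap) (simp add: mult_ac)
  moreover have "(\<Sum>r\<in>UNIV. u r * bench_y y \<pi> r) = (\<Sum>j\<in>UNIV. \<pi> j * (\<Sum>r\<in>UNIV. u r * y r j))"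
    unfolding bench_y_def sum_distrib_left by (subst sum.swap) (simp add: mult_ac)
  ultimately show ?thesis
    by (simp add: tvg_obj_def right_diff_distrib sum_subtractf)
qed

lemma tvg_obj_bench_nonneg:
  assumes "\<forall>j. 0 \<le> \<pi> j" and "tvg_feasible x y (bench_x x \<pi>) (bench_y y \<pi>) \<tau> v u"
  shows "0 \<le> tvg_obj (bench_x x \<pi>) (bench_y y \<pi>) v u"
  using assms unfolding tvg_obj_bench tvg_feasible_def by (simp add: sum_nonneg)

lemma pt_efficiency_eq_ratio:
  "pt_efficiency xo yo v u = (\<Sum>r\<in>UNIV. u r * yo r) / (\<Sum>i\<in>UNIV. v i * xo i)"
  by (cases "(\<Sum>i\<in>UNIV. v i * xo i) = 0")
    (simp_all add: pt_efficiency_def Let_def mult.assoc flip: sum_distrib_left)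

lemma pt_efficiency_zero_gap:
  assumes "tvg_feasible x y xo yo \<tau> v u" and "0 < \<tau>" and "tvg_obj xo yo v u = 0"
  shows "pt_efficiency xo yo v u = 1"
proof -
  have "0 < (\<Sum>i\<in>UNIV. v i * xo i)"
    using assms(1,2) unfolding tvg_feasible_def by (intro sum_pos) (auto simp: mult.commute intro: less_le_trans)
  with assms(3) show ?thesis
    by (simp add: pt_efficiency_eq_ratio tvg_obj_def)
qed

lemma ex_scale_ge_one:
  fixes f :: "'a::finite \<Rightarrow> real"
  assumes "\<forall>a. 0 < f a"
  shows "\<exists>c\<ge>0. \<forall>a. 1 \<le> c * f a"
proof (intro exI[of _ "\<Sum>a\<in>UNIV. 1 / f a"] conjI allI)
  show "0 \<le> (\<Sum>a\<in>UNIV. 1 / f a)"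
    using assms by (simp add: sum_nonneg less_imp_le)
  fix a
  have "1 / f a \<le> (\<Sum>b\<in>UNIV. 1 / f b)"
    using assms by (intro member_le_sum) (simp_all add: less_imp_le)
  then show "1 \<le> (\<Sum>b\<in>UNIV. 1 / f b) * f a"
    using assms by (simp add: divide_le_eq)
qed

lemma tvg_zero_gap_of_support:
  fixes x :: "'i::finite \<Rightarrow> 'j::finite \<Rightarrow> real" and y :: "'r::finite \<Rightarrow> 'j \<Rightarrow> real"
  assumes p: "\<forall>l. 0 < p $ l" and pZ: "\<forall>j. 0 \<le> p \<bullet> activity (\<lambda>i. x i j) (\<lambda>r. y r j)"
    and pw: "p \<bullet> activity xo yo = 0" and "\<forall>i. 0 < xo i" and "\<forall>r. 0 < yo r"
  shows "\<exists>v u. tvg_feasible x y xo yo 1 v u \<and> tvg_obj xo yo v u = 0"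
proof -
  have "\<forall>l. 0 < (case l of Inl i \<Rightarrow> xo i * p $ l | Inr r \<Rightarrow> yo r * p $ l)"
    using assms(4,5) p by (simp split: sum.split)
  from ex_scale_ge_one[OF this] obtain c where "0 \<le> c"
    and c: "\<forall>l. 1 \<le> c * (case l of Inl i \<Rightarrow> xo i * p $ l | Inr r \<Rightarrow> yo r * p $ l)"
    by blast
  define v where "v i = c * p $ Inl i" for i
  define u where "u r = c * p $ Inr r" for r
  have gap: "(\<Sum>i\<in>UNIV. v i * a i) - (\<Sum>r\<in>UNIV. u r * b r) = c * (p \<bullet> activity a b)" for a b
    by (simp add: inner_activity v_def u_def sum_distrib_left right_diff_distrib mult_ac)
  have "tvg_feasible x y xo yo 1 v u"
    unfolding tvg_feasible_def gap
  proof (intro conjI allI)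
    show "0 \<le> c * (p \<bullet> activity (\<lambda>i. x i j) (\<lambda>r. y r j))" for j
      using \<open>0 \<le> c\<close> pZ by simp
    show "1 \<le> xo i * v i" for i
      using c[rule_format, of "Inl i"] by (simp add: v_def mult_ac)
    show "1 \<le> yo r * u r" for r
      using c[rule_format, of "Inr r"] by (simp add: u_def mult_ac)
  qed
  moreover have "tvg_obj xo yo v u = 0"
    unfolding tvg_obj_def gap pw by simp
  ultimately show ?thesis
    by blast
qed

lemma tvg_optimal_bench_iff_zero_gap:
  assumes \<pi>: "\<forall>j. 0 \<le> \<pi> j"
    and vu: "tvg_feasible x y (bench_x x \<pi>) (bench_y y \<pi>) \<tau> v u"
    and gap: "tvg_obj (bench_x x \<pi>) (bench_y y \<pi>) v u = 0"
  shows "tvg_optimal x y (bench_x x \<pi>) (bench_y y \<pi>) \<tau> v' u' \<longleftrightarrow>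
    tvg_feasible x y (bench_x x \<pi>) (bench_y y \<pi>) \<tau> v' u' \<and> tvg_obj (bench_x x \<pi>) (bench_y y \<pi>) v' u' = 0"
  using vu gap tvg_obj_bench_nonneg[OF \<pi>] unfolding tvg_optimal_def by (metis order.antisym)

theorem theorem2:
  fixes x :: "'i::finite \<Rightarrow> 'j::finite \<Rightarrow> real"
    and y :: "'r::finite \<Rightarrow> 'j \<Rightarrow> real"
    and k :: 'j and \<tau> :: real
    and Q :: "'i \<Rightarrow> real" and P :: "'r \<Rightarrow> real" and \<pi> :: "'j \<Rightarrow> real"
  assumes "CARD('j) \<ge> 2 * (CARD('i) + CARD('r))"
    and "\<forall>i j. x i j > 0" and "\<forall>r j. y r j > 0"
    and "\<tau> > 0"
    and "tap_optimal \<tau> x y k Q P \<pi>"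
  shows "(\<exists>v u. tvg_optimal x y (bench_x x \<pi>) (bench_y y \<pi>) 1 v u) \<and>
         (\<forall>v u. tvg_optimal x y (bench_x x \<pi>) (bench_y y \<pi>) 1 v u \<longrightarrow>
                pt_efficiency (bench_x x \<pi>) (bench_y y \<pi>) v u = 1)"
proof -
  have feas: "tap_feasible x y k Q P \<pi>"
    using assms(5) unfolding tap_optimal_def by blast
  then have \<pi>: "\<forall>j. 0 \<le> \<pi> j"
    unfolding tap_feasible_def by blast
  have "cone_minimal (\<lambda>j. activity (\<lambda>i. x i j) (\<lambda>r. y r j)) (activity (bench_x x \<pi>) (bench_y y \<pi>))"
    using assms(2-5) by (intro tap_optimal_imp_cone_minimal) auto
  from cone_minimal_strictly_positive_support[OF this \<pi> activity_bench]
  obtain p where "\<forall>l. 0 < p $ l" "\<forall>j. 0 \<le> p \<bullet> activity (\<lambda>i. x i j) (\<lambda>r. y r j)"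
    "p \<bullet> activity (bench_x x \<pi>) (bench_y y \<pi>) = 0"
    by blast
  with tap_feasible_bench_pos[OF feas assms(2,3)]
  obtain v u where vu: "tvg_feasible x y (bench_x x \<pi>) (bench_y y \<pi>) 1 v u"
    and gap: "tvg_obj (bench_x x \<pi>) (bench_y y \<pi>) v u = 0"
    using tvg_zero_gap_of_support by blast
  note optimal_iff = tvg_optimal_bench_iff_zero_gap[OF \<pi> vu gap]
  show ?thesis
  proof (intro conjI exI allI impI)
    show "tvg_optimal x y (bench_x x \<pi>) (bench_y y \<pi>) 1 v u"
      using optimal_iff vu gap by blast
  next
    fix v' u'
    assume "tvg_optimal x y (bench_x x \<pi>) (bench_y y \<pi>) 1 v' u'"
    with optimal_iff show "pt_efficiency (bench_x x \<pi>) (bench_y y \<pi>) v' u' = 1"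
      by (auto intro: pt_efficiency_zero_gap)
  qed
qed

end
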